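(* Let $\langle A,\to\rangle$ be a conditional algebra and let $B$ be (the domain of) a Boolean subalgebra of $A$. Then the following are equivalent: (1) $E_B$ is a C-equivalence on the expanded Stone space $\langle\mathrm{Ul}(A),\tau_s,T_A\rangle$; (2) $B$ is closed under $\to$, i.e., $\langle B,\to\rangle$ is a subalgebra of $\langle A,\to\rangle$.
   Context: A conditional algebra is $\langle A,\to\rangle$ with $A$ a Boolean algebra and $\to$ binary with $a\to1=1$, $(a\to b)\wedge(a\to c)=a\to(b\wedge c)$, $(a\vee b)\to c\le(a\to c)\wedge(b\to c)$. $\mathrm{Ul}(A)$ is the Stone space of ultrafilters (closed sets are exactly the sets $\varphi(F)=\{u:F\subseteq u\}$, $F$ a filter, the improper filter $A$ included). $D^{\to}_u(F)=\{b:\exists a\in F,\ a\to b\in u\}$; $T_A(u,Z,v)$ iff there is a filter $F$ with $Z=\varphi(F)$ and $D^{\to}_u(F)\subseteq v$. $E_B=\{(u,v)\in\mathrm{Ul}(A)^2: u\cap B=v\cap B\}$. For an equivalence $E$ on a space $X$ with relation $T$ and closed sets $Y,C$: $Y\preceq_E C$ iff for every $y\in Y$ there is $x\in C$ with $E(x,y)$. $E$ is a C-equivalence if $E$ is a Boolean equivalence (for each $(x,y)\notin E$ there is a clopen set closed under $E$ containing $x$ but not $y$) and for all $x,x',y\in X$ and closed $Y$, if $E(x,y)$ and $T(x,Y,x')$ then there exist $y'$ with $E(x',y')$ and closed $C$ with $T(y,C,y')$ and $C\preceq_E Y$. *)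

theory Defs
  imports Main
begin

definition conditional_algebra :: "('a::boolean_algebra \<Rightarrow> 'a \<Rightarrow> 'a) \<Rightarrow> bool" where
  "conditional_algebra imp \<longleftrightarrow>
     (\<forall>a. imp a top = top) \<and>
     (\<forall>a b c. inf (imp a b) (imp a c) = imp a (inf b c)) \<and>
     (\<forall>a b c. imp (sup a b) c \<le> inf (imp a c) (imp b c))"

definition boolean_subalgebra :: "'a::boolean_algebra set \<Rightarrow> bool" where
  "boolean_subalgebra B \<longleftrightarrow> bot \<in> B \<and> top \<in> B \<and>
     (\<forall>a\<in>B. \<forall>b\<in>B. inf a b \<in> B \<and> sup a b \<in> B) \<and> (\<forall>a\<in>B. - a \<in> B)"

text \<open>Filters (the improper filter UNIV included).\<close>
definition ba_filter :: "'a::boolean_algebra set \<Rightarrow> bool" where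
  "ba_filter F \<longleftrightarrow> top \<in> F \<and> (\<forall>a\<in>F. \<forall>b. a \<le> b \<longrightarrow> b \<in> F) \<and>
     (\<forall>a\<in>F. \<forall>b\<in>F. inf a b \<in> F)"

definition proper_filter :: "'a::boolean_algebra set \<Rightarrow> bool" where
  "proper_filter F \<longleftrightarrow> ba_filter F \<and> bot \<notin> F"

definition ultrafilter :: "'a::boolean_algebra set \<Rightarrow> bool" where
  "ultrafilter u \<longleftrightarrow> proper_filter u \<and> (\<forall>G. proper_filter G \<and> u \<subseteq> G \<longrightarrow> G = u)"

definition Ul :: "'a::boolean_algebra set set" where
  "Ul = {u. ultrafilter u}"

definition phi :: "'a::boolean_algebra set \<Rightarrow> 'a set set" where
  "phi F = {u \<in> Ul. F \<subseteq> u}"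

definition stone_closed :: "'a::boolean_algebra set set \<Rightarrow> bool" where
  "stone_closed Z \<longleftrightarrow> (\<exists>F. ba_filter F \<and> Z = phi F)"

definition D_imp :: "('a::boolean_algebra \<Rightarrow> 'a \<Rightarrow> 'a) \<Rightarrow> 'a set \<Rightarrow> 'a set \<Rightarrow> 'a set" where
  "D_imp imp u F = {b. \<exists>a\<in>F. imp a b \<in> u}"

definition T_A :: "('a::boolean_algebra \<Rightarrow> 'a \<Rightarrow> 'a) \<Rightarrow> 'a set \<Rightarrow> 'a set set \<Rightarrow> 'a set \<Rightarrow> bool" where
  "T_A imp u Z v \<longleftrightarrow> (\<exists>F. ba_filter F \<and> Z = phi F \<and> D_imp imp u F \<subseteq> v)"

definition E_B :: "'a::boolean_algebra set \<Rightarrow> ('a set \<times> 'a set) set" where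
  "E_B B = {(u, v). u \<in> Ul \<and> v \<in> Ul \<and> u \<inter> B = v \<inter> B}"

definition clopen_in :: "'x set \<Rightarrow> ('x set \<Rightarrow> bool) \<Rightarrow> 'x set \<Rightarrow> bool" where
  "clopen_in X closed S \<longleftrightarrow> S \<subseteq> X \<and> closed S \<and> closed (X - S)"

definition E_below :: "('x \<times> 'x) set \<Rightarrow> 'x set \<Rightarrow> 'x set \<Rightarrow> bool" where
  "E_below E Y C \<longleftrightarrow> (\<forall>y\<in>Y. \<exists>x\<in>C. (x, y) \<in> E)"

definition boolean_equivalence :: "'x set \<Rightarrow> ('x set \<Rightarrow> bool) \<Rightarrow> ('x \<times> 'x) set \<Rightarrow> bool" where
  "boolean_equivalence X closed E \<longleftrightarrow> equiv X E \<and>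
     (\<forall>x\<in>X. \<forall>y\<in>X. (x, y) \<notin> E \<longrightarrow>
        (\<exists>S. clopen_in X closed S \<and> (\<forall>p q. (p, q) \<in> E \<longrightarrow> p \<in> S \<longrightarrow> q \<in> S)
             \<and> x \<in> S \<and> y \<notin> S))"

definition C_equivalence ::
  "'x set \<Rightarrow> ('x set \<Rightarrow> bool) \<Rightarrow> ('x \<Rightarrow> 'x set \<Rightarrow> 'x \<Rightarrow> bool) \<Rightarrow> ('x \<times> 'x) set \<Rightarrow> bool" where
  "C_equivalence X closed T E \<longleftrightarrow> boolean_equivalence X closed E \<and>
     (\<forall>x\<in>X. \<forall>x'\<in>X. \<forall>y\<in>X. \<forall>Y. closed Y \<longrightarrow> (x, y) \<in> E \<longrightarrow> T x Y x' \<longrightarrow>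
        (\<exists>y'\<in>X. \<exists>C. (x', y') \<in> E \<and> closed C \<and> T y C y' \<and> E_below E C Y))"

end

(*
  Everything is reduced to the prime filter theorem in the form: two meet-closed sets all of
  whose meets are nonzero lie in a common ultrafilter.

  If B is closed under the conditional, let E_B(x, y) and T(x, phi F, x'). Take C = phi G with
  G the filter generated by F \<inter> B; every ultrafilter of C is E_B-equivalent to one of phi F.
  An ultrafilter y' extending both D_y(G) and x' \<inter> B exists: a clash d \<le> -q with q \<in> x' \<inter> B
  would give f \<rightarrow> -q \<in> y for some f \<in> F \<inter> B, and since f \<rightarrow> -q \<in> B it lies in x as
  well, forcing -q \<in> x'.

  Conversely, if c = a \<rightarrow> b \<notin> B, there are E_B-equivalent ultrafilters x and y with
  c \<notin> x and c \<in> y, and an x' with T(x, phi{a..}, x') and b \<notin> x'. The C-equivalence condition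
  yields y' with E_B(x', y') and T(y, phi F', y') where phi F' is E_B-below phi{a..}; as a \<in> B
  this forces a \<in> F', hence b \<in> y', and b \<in> B transfers this to x'.
*)
theory Submission
  imports Defs
begin

definition meet_closed :: "'a::boolean_algebra set \<Rightarrow> bool" where
  "meet_closed S \<longleftrightarrow> top \<in> S \<and> (\<forall>a\<in>S. \<forall>b\<in>S. inf a b \<in> S)"

definition up_closure :: "'a::order set \<Rightarrow> 'a set" where
  "up_closure S = {z. \<exists>s\<in>S. s \<le> z}"

lemma subset_up_closure: "S \<subseteq> up_closure S"
  unfolding up_closure_def by blast

lemma ba_filter_imp_meet_closed: "ba_filter F \<Longrightarrow> meet_closed F"
  unfolding ba_filter_def meet_closed_def by blast

lemma ba_filter_atLeast: "ba_filter {a::'a::boolean_algebra..}"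
  unfolding ba_filter_def by auto

lemma meet_closed_Int_subalgebra:
  "meet_closed S \<Longrightarrow> boolean_subalgebra B \<Longrightarrow> meet_closed (S \<inter> B)"
  unfolding meet_closed_def boolean_subalgebra_def by blast

lemma ba_filter_up_closure:
  assumes "meet_closed S"
  shows "ba_filter (up_closure S)"
proof -
  have "inf a b \<in> up_closure S" if ab: "a \<in> up_closure S" "b \<in> up_closure S" for a b
  proof -
    obtain s t where "s \<in> S" "s \<le> a" "t \<in> S" "t \<le> b"
      using ab unfolding up_closure_def by blast
    then have "inf s t \<in> S" "inf s t \<le> inf a b"
      using assms by (auto simp: meet_closed_def le_infI1 le_infI2)
    then show ?thesis
      unfolding up_closure_def by blast
  qed
  then show ?thesis
    using assms unfolding ba_filter_def meet_closed_def up_closure_def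
    by (auto intro: order_trans)
qed

lemma proper_filter_Union_chain:
  assumes "C \<noteq> {}" "\<forall>F\<in>C. proper_filter F" "chain\<^sub>\<subseteq> C"
  shows "proper_filter (\<Union>C)"
proof -
  have filt: "ba_filter F" "bot \<notin> F" if "F \<in> C" for F
    using assms(2) that unfolding proper_filter_def by blast+
  have "inf a b \<in> \<Union>C" if ab: "a \<in> \<Union>C" "b \<in> \<Union>C" for a b
  proof -
    obtain F G where FG: "F \<in> C" "G \<in> C" "a \<in> F" "b \<in> G"
      using ab by blast
    with assms(3) have "F \<subseteq> G \<or> G \<subseteq> F"
      unfolding chain_subset_def by blast
    then have "inf a b \<in> F \<or> inf a b \<in> G"
      using FG filt(1)[of F] filt(1)[of G] unfolding ba_filter_def by blast
    then show ?thesis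
      using FG by blast
  qed
  moreover have "top \<in> \<Union>C"
    using assms(1) filt(1) unfolding ba_filter_def by blast
  moreover have "b \<in> \<Union>C" if "a \<in> \<Union>C" "a \<le> b" for a b
    using that filt(1) unfolding ba_filter_def by blast
  ultimately show ?thesis
    using filt(2) unfolding proper_filter_def ba_filter_def by blast
qed

lemma ex_ultrafilter_superset:
  assumes "proper_filter F"
  shows "\<exists>u\<in>Ul. F \<subseteq> u"
proof -
  let ?P = "{G. proper_filter G \<and> F \<subseteq> G}"
  have "\<exists>U\<in>?P. \<forall>G\<in>C. G \<subseteq> U" if C: "C \<in> chains ?P" for C
  proof (cases "C = {}")
    case True
    with assms show ?thesis by blast
  next
    case False
    have "proper_filter (\<Union>C)"
      using proper_filter_Union_chain[OF False] C unfolding chains_def by blast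
    moreover have "F \<subseteq> \<Union>C"
      using False C unfolding chains_def by blast
    ultimately show ?thesis by blast
  qed
  from Zorn_Lemma2[OF ballI[OF this]]
  obtain u where u: "u \<in> ?P" "\<forall>G\<in>?P. u \<subseteq> G \<longrightarrow> G = u"
    by blast
  then have "ultrafilter u"
    unfolding ultrafilter_def by blast
  with u(1) show ?thesis
    unfolding Ul_def by blast
qed

lemma Ul_ba_filter: "u \<in> Ul \<Longrightarrow> ba_filter u"
  unfolding Ul_def ultrafilter_def proper_filter_def by blast

lemma Ul_top: "u \<in> Ul \<Longrightarrow> top \<in> u"
  using Ul_ba_filter unfolding ba_filter_def by blast

lemma Ul_upward: "u \<in> Ul \<Longrightarrow> a \<in> u \<Longrightarrow> a \<le> b \<Longrightarrow> b \<in> u"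
  using Ul_ba_filter unfolding ba_filter_def by blast

lemma Ul_inf: "u \<in> Ul \<Longrightarrow> a \<in> u \<Longrightarrow> b \<in> u \<Longrightarrow> inf a b \<in> u"
  using Ul_ba_filter unfolding ba_filter_def by blast

lemma Ul_compl_iff:
  assumes "u \<in> Ul"
  shows "- a \<in> u \<longleftrightarrow> a \<notin> u"
proof
  assume "- a \<in> u"
  moreover have "bot \<notin> u"
    using assms unfolding Ul_def ultrafilter_def proper_filter_def by blast
  ultimately show "a \<notin> u"
    using Ul_inf[OF assms] by fastforce
next
  assume "a \<notin> u"
  show "- a \<in> u"
  proof (rule ccontr)
    assume "- a \<notin> u"
    \<comment> \<open>the filter generated by u and a, proper because -a \<notin> u\<close>
    let ?G = "{z. sup (- a) z \<in> u}"
    have "ba_filter ?G"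
      using Ul_top[OF assms] Ul_upward[OF assms] Ul_inf[OF assms]
      unfolding ba_filter_def by (auto simp: sup_inf_distrib1 intro: sup_mono)
    moreover have "bot \<notin> ?G" "u \<subseteq> ?G"
      using \<open>- a \<notin> u\<close> Ul_upward[OF assms] by auto
    ultimately have "?G = u"
      using assms unfolding Ul_def ultrafilter_def proper_filter_def by blast
    moreover have "a \<in> ?G"
      using Ul_top[OF assms] by simp
    ultimately show False
      using \<open>a \<notin> u\<close> by blast
  qed
qed

lemma meet_closed_Ul_Int: "u \<in> Ul \<Longrightarrow> boolean_subalgebra B \<Longrightarrow> meet_closed (u \<inter> B)"
  using Ul_ba_filter ba_filter_imp_meet_closed meet_closed_Int_subalgebra by blast

lemma ex_ultrafilter_joint:
  assumes P: "meet_closed P" and Q: "meet_closed Q" and "\<forall>p\<in>P. \<forall>q\<in>Q. inf p q \<noteq> bot"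
  shows "\<exists>u\<in>Ul. P \<subseteq> u \<and> Q \<subseteq> u"
proof -
  define S where "S = {inf p q |p q. p \<in> P \<and> q \<in> Q}"
  have "P \<subseteq> S" "Q \<subseteq> S"
  proof -
    have "top \<in> P" "top \<in> Q"
      using P Q unfolding meet_closed_def by blast+
    then show "P \<subseteq> S" "Q \<subseteq> S"
      unfolding S_def by force+
  qed
  have "meet_closed S"
    unfolding meet_closed_def
  proof (intro conjI ballI)
    show "top \<in> S"
      using \<open>P \<subseteq> S\<close> P unfolding meet_closed_def by blast
    fix s t assume "s \<in> S" "t \<in> S"
    then obtain p q p' q' where pq: "p \<in> P" "q \<in> Q" "p' \<in> P" "q' \<in> Q"
      and st: "s = inf p q" "t = inf p' q'"
      unfolding S_def by blast
    have "inf p p' \<in> P" "inf q q' \<in> Q"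
      using pq P Q unfolding meet_closed_def by blast+
    moreover have "inf s t = inf (inf p p') (inf q q')"
      unfolding st by (simp add: inf_aci)
    ultimately show "inf s t \<in> S"
      unfolding S_def by blast
  qed
  moreover have "bot \<notin> up_closure S"
  proof
    assume "bot \<in> up_closure S"
    then obtain p q where "p \<in> P" "q \<in> Q" "inf p q \<le> bot"
      unfolding S_def up_closure_def by blast
    with assms(3) show False
      by (simp add: bot_unique)
  qed
  ultimately have "proper_filter (up_closure S)"
    unfolding proper_filter_def using ba_filter_up_closure by blast
  then obtain u where "u \<in> Ul" "up_closure S \<subseteq> u"
    using ex_ultrafilter_superset by blast
  with \<open>P \<subseteq> S\<close> \<open>Q \<subseteq> S\<close> subset_up_closure[of S] show ?thesis
    by (meson order_trans)
qed

lemma ex_ultrafilter_avoiding: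
  assumes "meet_closed P" "\<forall>p\<in>P. \<not> p \<le> c"
  shows "\<exists>u\<in>Ul. P \<subseteq> u \<and> c \<notin> u"
proof -
  have "inf p q \<noteq> bot" if "p \<in> P" "q \<in> {- c..}" for p q
  proof
    assume "inf p q = bot"
    then have "inf p (- c) = bot"
      using that(2) by (metis atLeast_iff bot_unique inf_mono order_refl)
    with that(1) assms(2) show False
      by (simp add: inf_shunt)
  qed
  then obtain u where "u \<in> Ul" "P \<subseteq> u" "- c \<in> u"
    using ex_ultrafilter_joint[OF assms(1) ba_filter_imp_meet_closed[OF ba_filter_atLeast]]
    by blast
  then show ?thesis
    using Ul_compl_iff by blast
qed

lemma imp_mono_right:
  assumes "conditional_algebra imp" "b \<le> c"
  shows "imp a b \<le> imp a c"
proof -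
  have "imp a b = inf (imp a b) (imp a c)"
    using assms unfolding conditional_algebra_def by (metis inf_absorb1)
  then show ?thesis
    by (metis inf.orderI)
qed

lemma imp_antimono_left:
  assumes "conditional_algebra imp" "a \<le> a'"
  shows "imp a' c \<le> imp a c"
proof -
  have "imp a' c = imp (sup a a') c"
    using assms(2) by (simp add: sup_absorb2)
  also have "\<dots> \<le> inf (imp a c) (imp a' c)"
    using assms(1) unfolding conditional_algebra_def by blast
  finally show ?thesis
    by simp
qed

lemma meet_closed_D_imp:
  assumes "conditional_algebra imp" "u \<in> Ul" "ba_filter G"
  shows "meet_closed (D_imp imp u G)"
  unfolding meet_closed_def
proof (intro conjI ballI)
  have "imp top top = top" "top \<in> G"
    using assms(1,3) unfolding conditional_algebra_def ba_filter_def by blast+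
  then show "top \<in> D_imp imp u G"
    using Ul_top[OF assms(2)] unfolding D_imp_def by force
  fix d e assume "d \<in> D_imp imp u G" "e \<in> D_imp imp u G"
  then obtain a b where ab: "a \<in> G" "imp a d \<in> u" "b \<in> G" "imp b e \<in> u"
    unfolding D_imp_def by blast
  have "imp (inf a b) d \<in> u" "imp (inf a b) e \<in> u"
    using ab Ul_upward[OF assms(2)] imp_antimono_left[OF assms(1)] by (meson inf_le1 inf_le2)+
  then have "imp (inf a b) (inf d e) \<in> u"
    using Ul_inf[OF assms(2)] assms(1) unfolding conditional_algebra_def by metis
  moreover have "inf a b \<in> G"
    using ab assms(3) unfolding ba_filter_def by blast
  ultimately show "inf d e \<in> D_imp imp u G"
    unfolding D_imp_def by blast
qed

lemma D_imp_atLeast: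
  assumes "conditional_algebra imp" "u \<in> Ul"
  shows "D_imp imp u {a..} = {b. imp a b \<in> u}"
  using Ul_upward[OF assms(2)] imp_antimono_left[OF assms(1)] unfolding D_imp_def by auto

lemma phi_atLeast: "phi {b..} = {u \<in> Ul. b \<in> u}"
  unfolding phi_def using Ul_upward by auto

lemma stone_closed_phi_atLeast: "stone_closed (phi {b..})"
  unfolding stone_closed_def using ba_filter_atLeast by blast

lemma clopen_phi_atLeast: "clopen_in Ul stone_closed (phi {b..})"
proof -
  have "Ul - phi {b..} = phi {- b..}"
    unfolding phi_atLeast using Ul_compl_iff by blast
  then show ?thesis
    unfolding clopen_in_def using stone_closed_phi_atLeast phi_atLeast by auto
qed

lemma E_B_iff_subset:
  assumes "u \<in> Ul" "w \<in> Ul" "boolean_subalgebra B"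
  shows "(u, w) \<in> E_B B \<longleftrightarrow> u \<inter> B \<subseteq> w"
proof
  assume "u \<inter> B \<subseteq> w"
  moreover have "w \<inter> B \<subseteq> u"
  proof
    fix b assume "b \<in> w \<inter> B"
    moreover have "- b \<in> B"
      using \<open>b \<in> w \<inter> B\<close> assms(3) unfolding boolean_subalgebra_def by blast
    ultimately show "b \<in> u"
      using \<open>u \<inter> B \<subseteq> w\<close> Ul_compl_iff[OF assms(1)] Ul_compl_iff[OF assms(2)] by blast
  qed
  ultimately show "(u, w) \<in> E_B B"
    using assms unfolding E_B_def by blast
qed (auto simp: E_B_def)

lemma E_B_sym: "(u, w) \<in> E_B B \<Longrightarrow> (w, u) \<in> E_B B"
  unfolding E_B_def by blast

lemma equiv_E_B: "equiv Ul (E_B B)"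
  unfolding equiv_def refl_on_def sym_def trans_def E_B_def by auto

lemma boolean_equivalence_E_B:
  assumes "boolean_subalgebra B"
  shows "boolean_equivalence Ul stone_closed (E_B B)"
  unfolding boolean_equivalence_def
proof (intro conjI ballI impI equiv_E_B)
  fix x y assume "x \<in> Ul" "y \<in> Ul" "(x, y) \<notin> E_B B"
  then obtain b where b: "b \<in> x" "b \<in> B" "b \<notin> y"
    using E_B_iff_subset assms by blast
  have "(\<forall>p q. (p, q) \<in> E_B B \<longrightarrow> p \<in> phi {b..} \<longrightarrow> q \<in> phi {b..})"
    using b(2) unfolding phi_atLeast E_B_def by blast
  with b \<open>x \<in> Ul\<close> clopen_phi_atLeast
  show "\<exists>S. clopen_in Ul stone_closed S \<and> (\<forall>p q. (p, q) \<in> E_B B \<longrightarrow> p \<in> S \<longrightarrow> q \<in> S)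
            \<and> x \<in> S \<and> y \<notin> S"
    unfolding phi_atLeast by blast
qed

lemma E_below_phi_up_closure_Int:
  assumes "ba_filter F" "boolean_subalgebra B"
  shows "E_below (E_B B) (phi (up_closure (F \<inter> B))) (phi F)"
  unfolding E_below_def
proof
  fix c assume "c \<in> phi (up_closure (F \<inter> B))"
  then have c: "c \<in> Ul" "F \<inter> B \<subseteq> c"
    using subset_up_closure unfolding phi_def by blast+
  have "inf p q \<noteq> bot" if pq: "p \<in> F" "q \<in> c \<inter> B" for p q
  proof
    assume "inf p q = bot"
    then have "- q \<in> F \<inter> B"
      using pq assms unfolding ba_filter_def boolean_subalgebra_def by (simp add: inf_shunt)
    with pq c show False
      using Ul_compl_iff by blast
  qed
  then obtain w where w: "w \<in> Ul" "F \<subseteq> w" "c \<inter> B \<subseteq> w"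
    using ex_ultrafilter_joint[OF ba_filter_imp_meet_closed[OF assms(1)] meet_closed_Ul_Int[OF c(1) assms(2)]]
    by blast
  then have "(w, c) \<in> E_B B"
    using E_B_iff_subset c(1) assms(2) E_B_sym by blast
  moreover have "w \<in> phi F"
    using w unfolding phi_def by blast
  ultimately show "\<exists>w\<in>phi F. (w, c) \<in> E_B B"
    by blast
qed

lemma E_B_lifts_T_A:
  assumes ca: "conditional_algebra imp" and sb: "boolean_subalgebra B"
    and closed: "\<forall>a\<in>B. \<forall>b\<in>B. imp a b \<in> B"
    and x': "x' \<in> Ul" and y: "y \<in> Ul"
    and xy: "(x, y) \<in> E_B B" and T: "T_A imp x Y x'"
  shows "\<exists>y'\<in>Ul. \<exists>C. (x', y') \<in> E_B B \<and> stone_closed C \<and> T_A imp y C y' \<and> E_below (E_B B) C Y"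
proof -
  obtain F where F: "ba_filter F" "Y = phi F" "D_imp imp x F \<subseteq> x'"
    using T unfolding T_A_def by blast
  define G where "G = up_closure (F \<inter> B)"
  have G: "ba_filter G"
    unfolding G_def using ba_filter_up_closure meet_closed_Int_subalgebra ba_filter_imp_meet_closed F(1) sb
    by blast
  have "inf d q \<noteq> bot" if d: "d \<in> D_imp imp y G" and q: "q \<in> x' \<inter> B" for d q
  proof
    assume "inf d q = bot"
    then have "d \<le> - q"
      by (simp add: inf_shunt)
    obtain g where g: "g \<in> G" "imp g d \<in> y"
      using d unfolding D_imp_def by blast
    then obtain f where f: "f \<in> F \<inter> B" "f \<le> g"
      unfolding G_def up_closure_def by blast
    have "imp g d \<le> imp f (- q)"
      using imp_mono_right[OF ca \<open>d \<le> - q\<close>] imp_antimono_left[OF ca f(2)] by (rule order_trans)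
    then have "imp f (- q) \<in> y"
      using Ul_upward[OF y g(2)] by blast
    moreover have "imp f (- q) \<in> B" \<comment> \<open>the only use of closure under the conditional\<close>
      using closed f q sb unfolding boolean_subalgebra_def by blast
    ultimately have "imp f (- q) \<in> x"
      using xy unfolding E_B_def by blast
    then have "- q \<in> x'"
      using f F(3) unfolding D_imp_def by blast
    with q show False
      using Ul_compl_iff[OF x'] by blast
  qed
  then obtain y' where y': "y' \<in> Ul" "D_imp imp y G \<subseteq> y'" "x' \<inter> B \<subseteq> y'"
    using ex_ultrafilter_joint[OF meet_closed_D_imp[OF ca y G] meet_closed_Ul_Int[OF x' sb]]
    by blast
  have "(x', y') \<in> E_B B"
    using E_B_iff_subset x' y' sb by blast
  moreover have "stone_closed (phi G)" "T_A imp y (phi G) y'"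
    unfolding stone_closed_def T_A_def using G y'(2) by blast+
  moreover have "E_below (E_B B) (phi G) Y"
    unfolding G_def F(2) using E_below_phi_up_closure_Int F(1) sb .
  ultimately show ?thesis
    using y'(1) by blast
qed

lemma C_equivalence_E_B_if_closed:
  assumes "conditional_algebra imp" "boolean_subalgebra B" "\<forall>a\<in>B. \<forall>b\<in>B. imp a b \<in> B"
  shows "C_equivalence Ul stone_closed (T_A imp) (E_B B)"
  unfolding C_equivalence_def
  using boolean_equivalence_E_B[OF assms(2)] E_B_lifts_T_A[OF assms] by blast

lemma ex_E_B_separating:
  assumes "boolean_subalgebra B" "c \<notin> B"
  shows "\<exists>x\<in>Ul. \<exists>y\<in>Ul. (x, y) \<in> E_B B \<and> c \<in> x \<and> c \<notin> y"
proof -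
  define Q where "Q = uminus ` {b \<in> B. b \<le> c}"
  have "meet_closed Q"
    unfolding meet_closed_def
  proof (intro conjI ballI)
    show "top \<in> Q"
      using assms(1) unfolding Q_def boolean_subalgebra_def by (metis (mono_tags) bot_least compl_bot_eq image_eqI mem_Collect_eq)
    fix p q assume "p \<in> Q" "q \<in> Q"
    then obtain b b' where bb': "b \<in> B" "b \<le> c" "b' \<in> B" "b' \<le> c" "p = - b" "q = - b'"
      unfolding Q_def by blast
    then have "sup b b' \<in> {b \<in> B. b \<le> c}"
      using assms(1) unfolding boolean_subalgebra_def by simp
    moreover have "inf p q = - sup b b'"
      using bb' by simp
    ultimately show "inf p q \<in> Q"
      unfolding Q_def by blast
  qed
  moreover have "inf p q \<noteq> bot" if "p \<in> {c..}" "q \<in> Q" for p q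
  proof
    assume "inf p q = bot"
    obtain b where "b \<in> B" "b \<le> c" "q = - b"
      using \<open>q \<in> Q\<close> unfolding Q_def by blast
    with \<open>inf p q = bot\<close> \<open>p \<in> {c..}\<close> have "c = b"
      by (simp add: inf_shunt)
    with \<open>b \<in> B\<close> assms(2) show False
      by blast
  qed
  ultimately obtain x where x: "x \<in> Ul" "c \<in> x" "Q \<subseteq> x"
    using ex_ultrafilter_joint[OF ba_filter_imp_meet_closed[OF ba_filter_atLeast]] by blast
  have "\<not> p \<le> c" if "p \<in> x \<inter> B" for p
    using that x Ul_compl_iff unfolding Q_def by blast
  then obtain y where y: "y \<in> Ul" "x \<inter> B \<subseteq> y" "c \<notin> y"
    using ex_ultrafilter_avoiding[OF meet_closed_Ul_Int[OF x(1) assms(1)]] by blast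
  then have "(x, y) \<in> E_B B"
    using E_B_iff_subset x(1) assms(1) by blast
  with x y show ?thesis
    by blast
qed

lemma ex_T_A_successor_avoiding:
  assumes ca: "conditional_algebra imp" and y: "y \<in> Ul" and "imp a b \<notin> y"
  shows "\<exists>x'\<in>Ul. T_A imp y (phi {a..}) x' \<and> b \<notin> x'"
proof -
  have "\<not> d \<le> b" if "d \<in> D_imp imp y {a..}" for d
    using that assms Ul_upward imp_mono_right unfolding D_imp_atLeast[OF ca y] by blast
  then obtain x' where "x' \<in> Ul" "D_imp imp y {a..} \<subseteq> x'" "b \<notin> x'"
    using ex_ultrafilter_avoiding meet_closed_D_imp[OF ca y ba_filter_atLeast] by blast
  then show ?thesis
    unfolding T_A_def using ba_filter_atLeast by blast
qed

lemma mem_filter_if_E_below_phi_atLeast: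
  assumes F: "ba_filter F" and "a \<in> B" and below: "E_below (E_B B) (phi F) (phi {a..})"
  shows "a \<in> F"
proof (rule ccontr)
  assume "a \<notin> F"
  then have "\<not> p \<le> a" if "p \<in> F" for p
    using F that unfolding ba_filter_def by blast
  then obtain w where w: "w \<in> Ul" "F \<subseteq> w" "a \<notin> w"
    using ex_ultrafilter_avoiding ba_filter_imp_meet_closed[OF F] by blast
  then have "w \<in> phi F"
    unfolding phi_def by blast
  then obtain z where "z \<in> phi {a..}" "(z, w) \<in> E_B B"
    using below unfolding E_below_def by blast
  with w \<open>a \<in> B\<close> show False
    unfolding phi_atLeast E_B_def by blast
qed

lemma closed_if_C_equivalence_E_B:
  assumes ca: "conditional_algebra imp" and sb: "boolean_subalgebra B"
    and CE: "C_equivalence Ul stone_closed (T_A imp) (E_B B)"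
    and "a \<in> B" "b \<in> B"
  shows "imp a b \<in> B"
proof (rule ccontr)
  assume "imp a b \<notin> B"
  then obtain x y where xy: "x \<in> Ul" "y \<in> Ul" "(x, y) \<in> E_B B" "imp a b \<notin> x" "imp a b \<in> y"
    using ex_E_B_separating[OF sb] E_B_sym by blast
  obtain x' where x': "x' \<in> Ul" "T_A imp x (phi {a..}) x'" "b \<notin> x'"
    using ex_T_A_successor_avoiding[OF ca xy(1,4)] by blast
  have "\<exists>y'\<in>Ul. \<exists>C. (x', y') \<in> E_B B \<and> stone_closed C \<and> T_A imp y C y' \<and> E_below (E_B B) C (phi {a..})"
    using CE xy(1-3) x'(1,2) stone_closed_phi_atLeast unfolding C_equivalence_def by blast
  then obtain y' C where "y' \<in> Ul" "(x', y') \<in> E_B B" "T_A imp y C y'" "E_below (E_B B) C (phi {a..})"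
    by blast
  then obtain F where F: "ba_filter F" "D_imp imp y F \<subseteq> y'" "E_below (E_B B) (phi F) (phi {a..})"
    unfolding T_A_def by blast
  then have "b \<in> y'"
    using mem_filter_if_E_below_phi_atLeast[OF F(1) \<open>a \<in> B\<close>] xy(5) unfolding D_imp_def by blast
  with \<open>(x', y') \<in> E_B B\<close> \<open>b \<in> B\<close> x'(3) show False
    unfolding E_B_def by blast
qed

theorem theorem7p5:
  fixes imp :: "'a::boolean_algebra \<Rightarrow> 'a \<Rightarrow> 'a" and B :: "'a set"
  assumes "conditional_algebra imp"
    and "boolean_subalgebra B"
  shows "C_equivalence Ul stone_closed (T_A imp) (E_B B) \<longleftrightarrow>
         (\<forall>a\<in>B. \<forall>b\<in>B. imp a b \<in> B)"
  using closed_if_C_equivalence_E_B[OF assms] C_equivalence_E_B_if_closed[OF assms] by blast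

end
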